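(* Let $w\in W^{\mathfrak p}$ and let $\mu$ be a labeling of the points of $P=\{-2n,\dots,-1,1,\dots,2n\}$ by symbols $\uparrow,\downarrow$ which is antisymmetric (the label at $-j$ is the opposite of the label at $j$ for all $j$) and has $\uparrow$ at every point $n+1,\dots,2n$. If every cup of $C(w)$ has one endpoint labeled $\uparrow$ and the other labeled $\downarrow$ by $\mu$, then the number of $j\in\{1,\dots,n\}$ with label $\uparrow$ is even.
   Context: Let $n\ge4$, $W$ the Weyl group of type $D_n$ with simple reflections $s_0,\dots,s_{n-1}$ ($s_0,s_1$ both joined to $s_2$, $s_i$ joined to $s_{i+1}$ for $i\ge2$), $W_{\mathfrak p}=\langle s_1,\dots,s_{n-1}\rangle$, $W^{\mathfrak p}$ the minimal length representatives of $W_{\mathfrak p}\backslash W$. For $w\in W^{\mathfrak p}$ let $(\alpha_1,\dots,\alpha_n)=(+,\dots,+)\cdot w$ for the right action on $\{+,-\}^n$ where $s_i$ ($i\ge1$) swaps entries $i,i+1$ and $s_0$ sends $(a_1,a_2,\dots)$ to $(-a_2,-a_1,\dots)$; set $\alpha_{-i}=-\alpha_i$. Label $P$ by $+$ at $j<-n$, $-$ at $j>n$, $\alpha_j$ at $1\le|j|\le n$. Let $M$ be the unique set of non-intersecting arcs in the lower half plane matching the points of $P$ in pairs, each arc joining a $+$ point to a $-$ point on its right. The arcs of $M$ joining a negative and a positive point are $(-y_1,y_1),\dots,(-y_{2k},y_{2k})$ with $y_1<\dots<y_{2k}$. The cup diagram $C(w)$ is obtained from $M$ by replacing, for each $j$,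 the arcs $(-y_{2j-1},y_{2j-1})$ and $(-y_{2j},y_{2j})$ by the two (linked) arcs joining $-y_{2j}$ to $y_{2j-1}$ and $-y_{2j-1}$ to $y_{2j}$; its arcs are called cups. *)

theory Defs
  imports Main
begin

text \<open>Simple reflection s_i realised as a (finitely supported) signed permutation of int:
 s_0 = reflection in e_1+e_2 : 1 -> -2, 2 -> -1, -1 -> 2, -2 -> 1;
 s_i (i >= 1) swaps i,i+1 and -i,-(i+1).  This is a faithful realisation of W(D_n)
 when the indices are restricted to 0..n-1.\<close>

definition sref :: "nat \<Rightarrow> int \<Rightarrow> int" where
  "sref i = (if i = 0 then
      (\<lambda>x. if x = 1 then -2 else if x = 2 then -1 else if x = -1 then 2
           else if x = -2 then 1 else x)
    else
      (\<lambda>x. if x = int i then int i + 1 else if x = int i + 1 then int i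
           else if x = - int i then - (int i + 1) else if x = - (int i + 1) then - int i
           else x))"

definition welt :: "nat list \<Rightarrow> int \<Rightarrow> int" where
  "welt ws = foldr (\<lambda>i f. sref i \<circ> f) ws id"

definition WD :: "nat \<Rightarrow> (int \<Rightarrow> int) set" where
  "WD n = {welt ws | ws. set ws \<subseteq> {..<n}}"

definition Wpar :: "nat \<Rightarrow> (int \<Rightarrow> int) set" where
  "Wpar n = {welt ws | ws. set ws \<subseteq> {1..<n}}"

definition wlen :: "nat \<Rightarrow> (int \<Rightarrow> int) \<Rightarrow> nat" where
  "wlen n w = (LEAST k. \<exists>ws. set ws \<subseteq> {..<n} \<and> length ws = k \<and> welt ws = w)"

definition Wp_reps :: "nat \<Rightarrow> (int \<Rightarrow> int) set" where
  "Wp_reps n = {w \<in> WD n. \<forall>u \<in> Wpar n. wlen n w \<le> wlen n (u \<circ> w)}"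

text \<open>A sign sequence (a_1,...,a_n) is a list of length n; True = +, False = -.
  Entry a_i is stored at list position i-1.\<close>
definition sact :: "nat \<Rightarrow> bool list \<Rightarrow> bool list" where
  "sact i a = (if i = 0 then (\<not> a ! 1) # (\<not> a ! 0) # drop 2 a
               else a[i - 1 := a ! i, i := a ! (i - 1)])"

definition wact :: "bool list \<Rightarrow> nat list \<Rightarrow> bool list" where
  "wact a ws = foldl (\<lambda>b i. sact i b) a ws"

definition Pset :: "nat \<Rightarrow> int set" where
  "Pset n = {- 2 * int n .. -1} \<union> {1 .. 2 * int n}"

definition plab :: "nat \<Rightarrow> bool list \<Rightarrow> int \<Rightarrow> bool" where
  "plab n a j = (if j < - int n then True else if j > int n then False
                 else if j > 0 then a ! (nat j - 1) else \<not> (a ! (nat (- j) - 1)))"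

text \<open>Arcs are pairs (left endpoint, right endpoint).  A valid M: perfect matching of P by arcs
  joining a + point to a - point on its right, pairwise non-intersecting (not interleaved).\<close>
definition is_M :: "nat \<Rightarrow> bool list \<Rightarrow> (int \<times> int) set \<Rightarrow> bool" where
  "is_M n a M \<longleftrightarrow>
     M \<subseteq> Pset n \<times> Pset n \<and>
     (\<forall>(x, y) \<in> M. x < y \<and> plab n a x \<and> \<not> plab n a y) \<and>
     (\<forall>p \<in> Pset n. card {e \<in> M. fst e = p \<or> snd e = p} = 1) \<and>
     (\<forall>(x, y) \<in> M. \<forall>(u, v) \<in> M. \<not> (x < u \<and> u < y \<and> y < v))"

definition Mdiag :: "nat \<Rightarrow> bool list \<Rightarrow> (int \<times> int) set" where
  "Mdiag n a = (THE M. is_M n a M)"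

definition crossY :: "nat \<Rightarrow> bool list \<Rightarrow> int list" where
  "crossY n a = sorted_list_of_set {y. \<exists>x. (x, y) \<in> Mdiag n a \<and> x < 0 \<and> 0 < y}"

text \<open>Cups of C(w): the arcs (-y_{2j-1},y_{2j-1}), (-y_{2j},y_{2j}) are replaced by
  (-y_{2j}, y_{2j-1}) and (-y_{2j-1}, y_{2j}).  (Lists are 0-indexed: y_{2j-1} = Y!(2j'), y_{2j} = Y!(2j'+1).)\<close>
definition cups :: "nat \<Rightarrow> bool list \<Rightarrow> (int \<times> int) set" where
  "cups n a = (let M = Mdiag n a; Y = crossY n a in
     {(x, y) \<in> M. \<not> (x < 0 \<and> 0 < y)}
     \<union> {(- (Y ! (2 * j + 1)), Y ! (2 * j)) | j. 2 * j + 1 < length Y}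
     \<union> {(- (Y ! (2 * j)), Y ! (2 * j + 1)) | j. 2 * j + 1 < length Y})"

end

theory Submission
  imports Defs "HOL-Library.Multiset"
begin

text \<open>The labels of the points of P, read from left to right, form a Dyck word: there are as many
  + as - and no initial segment contains more - than +.  Hence the non-crossing matching M exists and
  is unique (the leftmost - and the point just before it must be joined), and by uniqueness it is
  invariant under the reflection j \<mapsto> -j.  So the arcs of M crossing 0 are exactly the arcs (-y, y)
  with y in Y = {y_1 < ... < y_2k}.

  The points of {1..2n} outside Y are matched by arcs of M which are also cups of C(w); each of them
  joins a + to a - of \<alpha>, and an \<up> to a \<down> of \<mu>, so there are as many \<up> there as + in \<alpha>.  On Y,
  the linked cups (-y_2j, y_2j-1) and antisymmetry give \<mu>(y_2j-1) = \<mu>(y_2j), so Y carries an even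
  number of \<up>.  As \<mu> is \<up> on n+1..2n, the number of \<up> in 1..n plus the number of - in \<alpha> is the
  number of \<up> on Y.  Finally \<alpha> has an even number of -, since every s_i preserves that parity.\<close>

lemma card_eq_1_iff_ex1: "card {x\<in>A. P x} = 1 \<longleftrightarrow> (\<exists>!x\<in>A. P x)"
proof
  assume "card {x\<in>A. P x} = 1"
  then obtain x where "{x\<in>A. P x} = {x}" by (auto simp: card_1_singleton_iff)
  then show "\<exists>!x\<in>A. P x" by (auto simp: set_eq_iff)
next
  assume "\<exists>!x\<in>A. P x"
  then obtain x where "{x\<in>A. P x} = {x}" by blast
  then show "card {x\<in>A. P x} = 1" by simp
qed

lemma card_filter_add_filter_not: "finite A \<Longrightarrow> card {x\<in>A. P x} + card {x\<in>A. \<not> P x} = card A"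
  by (subst card_Un_disjoint[symmetric]) (auto intro: arg_cong[where f = card])

lemma even_length_filter_pairs:
  assumes "\<And>j. 2 * j + 1 < length xs \<Longrightarrow> P (xs ! (2 * j)) = P (xs ! (2 * j + 1))"
    and "even (length xs)"
  shows "even (length (filter P xs))"
  using assms
proof (induction xs rule: induct_list012)
  case (3 x y zs)
  have "P x = P y" using "3.prems"(1)[of 0] by simp
  moreover have "even (length (filter P zs))"
    using "3.IH"(1) "3.prems"(1)[of "Suc j" for j] "3.prems"(2) by simp
  ultimately show ?case by simp
qed simp_all

section \<open>Perfect and non-crossing matchings\<close>

definition perfect_matching :: "'a set \<Rightarrow> ('a \<times> 'a) set \<Rightarrow> bool" where
  "perfect_matching S M \<longleftrightarrow> M \<subseteq> S \<times> S \<and> (\<forall>p\<in>S. \<exists>!e\<in>M. fst e = p \<or> snd e = p)"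

lemma perfect_matchingI:
  assumes "M \<subseteq> S \<times> S" and "\<And>p. p \<in> S \<Longrightarrow> \<exists>e\<in>M. fst e = p \<or> snd e = p"
    and "\<And>e e' p. e \<in> M \<Longrightarrow> e' \<in> M \<Longrightarrow> fst e = p \<or> snd e = p \<Longrightarrow> fst e' = p \<or> snd e' = p
      \<Longrightarrow> e = e'"
  shows "perfect_matching S M"
  unfolding perfect_matching_def using assms by blast

lemma perfect_matching_arc_mem:
  "perfect_matching S M \<Longrightarrow> (x, y) \<in> M \<Longrightarrow> x \<in> S \<and> y \<in> S"
  unfolding perfect_matching_def by blast

lemma perfect_matching_covers:
  "perfect_matching S M \<Longrightarrow> p \<in> S \<Longrightarrow> \<exists>e\<in>M. fst e = p \<or> snd e = p"
  unfolding perfect_matching_def by blast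

lemma perfect_matching_unique_arc:
  assumes "perfect_matching S M" "e \<in> M" "e' \<in> M"
    and "fst e = p \<or> snd e = p" "fst e' = p \<or> snd e' = p"
  shows "e = e'"
proof -
  have "p \<in> S" using assms(1,2,4) unfolding perfect_matching_def by auto
  then show ?thesis using assms unfolding perfect_matching_def by metis
qed

lemma perfect_matching_remove:
  assumes "perfect_matching S M" and "(x, y) \<in> M"
  shows "perfect_matching (S - {x, y}) (M - {(x, y)})"
proof (rule perfect_matchingI)
  have "u \<notin> {x, y} \<and> v \<notin> {x, y}" if "(u, v) \<in> M" "(u, v) \<noteq> (x, y)" for u v
    using perfect_matching_unique_arc[OF assms(1) that(1) assms(2)] that(2) by auto
  then show "M - {(x, y)} \<subseteq> (S - {x, y}) \<times> (S - {x, y})"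
    using perfect_matching_arc_mem[OF assms(1)] by auto
  show "\<exists>e\<in>M - {(x, y)}. fst e = p \<or> snd e = p" if "p \<in> S - {x, y}" for p
    using perfect_matching_covers[OF assms(1), of p] that by fastforce
qed (use perfect_matching_unique_arc[OF assms(1)] in blast)

lemma perfect_matching_insert:
  assumes "perfect_matching (S - {x, y}) M" and "x \<in> S" "y \<in> S"
  shows "perfect_matching S (insert (x, y) M)"
proof (rule perfect_matchingI)
  show "insert (x, y) M \<subseteq> S \<times> S" using assms perfect_matching_arc_mem[OF assms(1)] by auto
  show "\<exists>e\<in>insert (x, y) M. fst e = p \<or> snd e = p" if "p \<in> S" for p
    using perfect_matching_covers[OF assms(1), of p] that by (cases "p \<in> {x, y}") auto
  have away: "fst e \<notin> {x, y} \<and> snd e \<notin> {x, y}" if "e \<in> M" for e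
    using perfect_matching_arc_mem[OF assms(1), of "fst e" "snd e"] that by simp
  show "e = e'" if "e \<in> insert (x, y) M" "e' \<in> insert (x, y) M"
    "fst e = p \<or> snd e = p" "fst e' = p \<or> snd e' = p" for e e' p
  proof (cases "e \<in> M \<and> e' \<in> M")
    case True
    then show ?thesis using that(3,4) perfect_matching_unique_arc[OF assms(1)] by blast
  next
    case False
    then show ?thesis using that away by fastforce
  qed
qed

lemma card_perfect_matching_sides:
  assumes "perfect_matching R A" and "\<forall>e\<in>A. f (fst e) \<noteq> f (snd e)"
  shows "card {p\<in>R. f p} = card A"
proof -
  define pick where "pick e = (if f (fst e) then fst e else snd e)" for e
  have "bij_betw pick A {p\<in>R. f p}"
  proof (rule bij_betwI')
    have endpoint: "fst e = pick e \<or> snd e = pick e" for e unfolding pick_def by simp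
    show "pick e = pick e' \<longleftrightarrow> e = e'" if "e \<in> A" "e' \<in> A" for e e'
      using perfect_matching_unique_arc[OF assms(1) that endpoint[of e]] endpoint[of e'] by auto
    show "pick e \<in> {p\<in>R. f p}" if "e \<in> A" for e
      using that assms(2) perfect_matching_arc_mem[OF assms(1), of "fst e" "snd e"]
      unfolding pick_def by auto
    show "\<exists>e\<in>A. p = pick e" if "p \<in> {p\<in>R. f p}" for p
      using that assms(2) perfect_matching_covers[OF assms(1), of p] unfolding pick_def by fastforce
  qed
  then show ?thesis by (simp add: bij_betw_same_card)
qed

lemma adjacent_plus_minus_pair:
  fixes S :: "'a::linorder set"
  assumes "finite S" and "y \<in> S" "\<not> L y" "\<forall>s\<in>S. \<not> L s \<longrightarrow> y \<le> s" and "\<exists>s\<in>S. s < y"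
  obtains x where "x \<in> S" "x < y" "L x" "\<forall>z\<in>S. \<not> (x < z \<and> z < y)"
proof
  let ?B = "{s\<in>S. s < y}"
  have "finite ?B" "?B \<noteq> {}" using assms(1,5) by auto
  then show "Max ?B \<in> S" "Max ?B < y" "\<forall>z\<in>S. \<not> (Max ?B < z \<and> z < y)"
    using Max_in Max_ge by fastforce+
  then show "L (Max ?B)" using assms(4) by fastforce
qed

locale noncrossing_matching =
  fixes S :: "'a::linorder set" and L :: "'a \<Rightarrow> bool" and M :: "('a \<times> 'a) set"
  assumes perfect: "perfect_matching S M"
    and arc_oriented: "(x, y) \<in> M \<Longrightarrow> x < y \<and> L x \<and> \<not> L y"
    and noncrossing: "(x, y) \<in> M \<Longrightarrow> (u, v) \<in> M \<Longrightarrow> \<not> (x < u \<and> u < y \<and> y < v)"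
begin

lemma arc_mem: "(x, y) \<in> M \<Longrightarrow> x \<in> S \<and> y \<in> S"
  using perfect_matching_arc_mem[OF perfect] .

lemma arc_unique:
  "e \<in> M \<Longrightarrow> e' \<in> M \<Longrightarrow> fst e = p \<or> snd e = p \<Longrightarrow> fst e' = p \<or> snd e' = p \<Longrightarrow> e = e'"
  using perfect_matching_unique_arc[OF perfect] .

lemma arc_ending_at:
  assumes "y \<in> S" "\<not> L y"
  obtains x where "(x, y) \<in> M"
proof -
  obtain e where "e \<in> M" "fst e = y \<or> snd e = y"
    using perfect_matching_covers[OF perfect assms(1)] by blast
  with arc_oriented[of "fst e" "snd e"] assms(2) have "(fst e, y) \<in> M" by auto
  then show ?thesis by (rule that)
qed

lemma arc_starting_at:
  assumes "x \<in> S" "L x"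
  obtains y where "(x, y) \<in> M"
proof -
  obtain e where "e \<in> M" "fst e = x \<or> snd e = x"
    using perfect_matching_covers[OF perfect assms(1)] by blast
  with arc_oriented[of "fst e" "snd e"] assms(2) have "(x, snd e) \<in> M" by auto
  then show ?thesis by (rule that)
qed

text \<open>An adjacent pair \<open>+ -\<close> is always joined by an arc: any other arcs at its two ends would cross.\<close>
lemma adjacent_arc:
  assumes "x \<in> S" "y \<in> S" "x < y" "L x" "\<not> L y" and "\<forall>z\<in>S. \<not> (x < z \<and> z < y)"
  shows "(x, y) \<in> M"
proof -
  obtain v where xv: "(x, v) \<in> M" using arc_starting_at assms(1,4) .
  obtain u where uy: "(u, y) \<in> M" using arc_ending_at assms(2,5) .
  have "y \<le> v" using assms(3,6) arc_oriented[OF xv] arc_mem[OF xv] by force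
  moreover have "u \<le> x" using assms(3,6) arc_oriented[OF uy] arc_mem[OF uy] by force
  ultimately have "u = x \<or> v = y" using noncrossing[OF uy xv] assms(3) by auto
  then show ?thesis using xv uy by blast
qed

lemma remove_arc:
  assumes "(x, y) \<in> M"
  shows "noncrossing_matching (S - {x, y}) L (M - {(x, y)})"
  using perfect_matching_remove[OF perfect assms] arc_oriented noncrossing
  by unfold_locales auto

end

text \<open>Arcs crossing \<open>0\<close> of a reflection-symmetric matching are themselves symmetric, since an arc
  \<open>(x, y)\<close> and its mirror image \<open>(-y, -x)\<close> would otherwise cross.\<close>
lemma noncrossing_matching_crossing_arc:
  fixes M :: "('a::linordered_ab_group_add \<times> 'a) set"
  assumes "noncrossing_matching S L M" and "\<And>x y. (x, y) \<in> M \<Longrightarrow> (- y, - x) \<in> M"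
    and "(x, y) \<in> M" "x < 0" "0 < y"
  shows "x = - y"
proof -
  interpret noncrossing_matching S L M by fact
  have mirror: "(- y, - x) \<in> M" using assms(2,3) .
  have "- y < y" "x < - x" using assms(4,5) by simp_all
  moreover have "x < - y \<longleftrightarrow> y < - x" "- y < x \<longleftrightarrow> - x < y" by (simp_all add: less_minus_iff minus_less_iff)
  ultimately show ?thesis
    using noncrossing[OF assms(3) mirror] noncrossing[OF mirror assms(3)] by (meson linorder_neqE)
qed

lemma noncrossing_matching_reflect:
  fixes S :: "'a::linordered_ab_group_add set"
  assumes "noncrossing_matching S L M"
    and "\<And>p. - p \<in> S \<longleftrightarrow> p \<in> S" and "\<And>p. p \<in> S \<Longrightarrow> L (- p) \<longleftrightarrow> \<not> L p"
  shows "noncrossing_matching S L ((\<lambda>(x, y). (- y, - x)) ` M)"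
proof -
  interpret noncrossing_matching S L M by fact
  let ?mirror = "\<lambda>(x, y). (- y, - x) :: 'a \<times> 'a"
  have "perfect_matching S (?mirror ` M)"
  proof (rule perfect_matchingI)
    show "?mirror ` M \<subseteq> S \<times> S" using arc_mem assms(2) by auto
    show "\<exists>e\<in>?mirror ` M. fst e = p \<or> snd e = p" if "p \<in> S" for p
      using perfect_matching_covers[OF perfect, of "- p"] that assms(2) by force
    show "e = e'" if e: "e \<in> ?mirror ` M" "fst e = p \<or> snd e = p"
      and e': "e' \<in> ?mirror ` M" "fst e' = p \<or> snd e' = p" for e e' p
    proof -
      obtain a b where ab: "(a, b) \<in> M" "e = (- b, - a)" using e(1) by auto
      obtain a' b' where ab': "(a', b') \<in> M" "e' = (- b', - a')" using e'(1) by auto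
      have "(a, b) = (a', b')"
        using arc_unique[OF ab(1) ab'(1), of "- p"] e(2) e'(2) ab(2) ab'(2) by auto
      then show ?thesis using ab(2) ab'(2) by simp
    qed
  qed
  moreover have "x < y \<and> L x \<and> \<not> L y" if "(x, y) \<in> ?mirror ` M" for x y
  proof -
    obtain a b where "(a, b) \<in> M" "x = - b" "y = - a" using \<open>(x, y) \<in> ?mirror ` M\<close> by auto
    then show ?thesis using arc_oriented arc_mem assms(3) by auto
  qed
  moreover have "\<not> (x < u \<and> u < y \<and> y < v)"
    if xy: "(x, y) \<in> ?mirror ` M" and uv: "(u, v) \<in> ?mirror ` M" for x y u v
  proof -
    obtain a b where "(a, b) \<in> M" "x = - b" "y = - a" using xy by auto
    moreover obtain c d where "(c, d) \<in> M" "u = - d" "v = - c" using uv by auto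
    ultimately show ?thesis using noncrossing[of c d a b] by auto
  qed
  ultimately show ?thesis by unfold_locales auto
qed

lemma noncrossing_matching_insert:
  assumes "noncrossing_matching (S - {x, y}) L M"
    and "x \<in> S" "y \<in> S" "x < y" "L x" "\<not> L y" and "\<forall>z\<in>S. \<not> (x < z \<and> z < y)"
  shows "noncrossing_matching S L (insert (x, y) M)"
proof -
  interpret noncrossing_matching "S - {x, y}" L M by fact
  have outside: "\<not> (x < z \<and> z < y)" if "(u, v) \<in> M" "z = u \<or> z = v" for u v z
    using assms(7) arc_mem[OF that(1)] that(2) by auto
  show ?thesis
  proof unfold_locales
    show "perfect_matching S (insert (x, y) M)" using perfect_matching_insert[OF perfect assms(2,3)] .
    show "u < v \<and> L u \<and> \<not> L v" if "(u, v) \<in> insert (x, y) M" for u v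
      using that assms(4-6) arc_oriented by auto
    show "\<not> (a < u \<and> u < b \<and> b < v)" if "(a, b) \<in> insert (x, y) M" "(u, v) \<in> insert (x, y) M"
      for a b u v
      using that noncrossing outside arc_oriented by blast
  qed
qed

lemma noncrossing_matching_unique:
  assumes "finite S" "noncrossing_matching S L M1" "noncrossing_matching S L M2"
  shows "M1 = M2"
  using assms
proof (induction "card S" arbitrary: S M1 M2 rule: less_induct)
  case less
  interpret M1: noncrossing_matching S L M1 by fact
  interpret M2: noncrossing_matching S L M2 by fact
  show ?case
  proof (cases "S = {}")
    case True
    then show ?thesis using M1.arc_mem M2.arc_mem by auto
  next
    case False
    then obtain p where "p \<in> S" by blast
    then obtain e where "e \<in> M1" by (metis perfect_matching_covers[OF M1.perfect])
    then have "snd e \<in> {s\<in>S. \<not> L s}" using M1.arc_mem M1.arc_oriented by (cases e) auto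
    define y where "y = Min {s\<in>S. \<not> L s}"
    have fin: "finite {s\<in>S. \<not> L s}" using less.prems(1) by simp
    have y: "y \<in> S" "\<not> L y" "\<forall>s\<in>S. \<not> L s \<longrightarrow> y \<le> s"
      using Min_in[OF fin] Min_le[OF fin] \<open>snd e \<in> _\<close> unfolding y_def by auto
    obtain u where "(u, y) \<in> M1" using M1.arc_ending_at y(1,2) .
    then have "u \<in> S" "u < y" using M1.arc_mem M1.arc_oriented by auto
    then obtain x where x: "x \<in> S" "x < y" "L x" "\<forall>z\<in>S. \<not> (x < z \<and> z < y)"
      using adjacent_plus_minus_pair[OF less.prems(1) y] by blast
    have xy: "(x, y) \<in> M1" "(x, y) \<in> M2"
      using M1.adjacent_arc M2.adjacent_arc x y by simp_all
    have "card (S - {x, y}) < card S"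
      using card_Diff2_less[OF less.prems(1) x(1) y(1)] by (simp add: Diff_insert2[symmetric])
    then have "M1 - {(x, y)} = M2 - {(x, y)}"
      using less.hyps less.prems(1) M1.remove_arc[OF xy(1)] M2.remove_arc[OF xy(2)] by blast
    then show ?thesis using xy by blast
  qed
qed

definition dyck_labelling :: "'a::linorder set \<Rightarrow> ('a \<Rightarrow> bool) \<Rightarrow> bool" where
  "dyck_labelling S L \<longleftrightarrow> card {s\<in>S. L s} = card {s\<in>S. \<not> L s}
     \<and> (\<forall>t. card {s\<in>S. s \<le> t \<and> \<not> L s} \<le> card {s\<in>S. s \<le> t \<and> L s})"

lemma dyck_labelling_remove:
  assumes "finite S" "dyck_labelling S L" and "x \<in> S" "y \<in> S" "x < y" "L x" "\<not> L y"
    and "\<forall>s\<in>S. s < y \<longrightarrow> L s"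
  shows "dyck_labelling (S - {x, y}) L"
  unfolding dyck_labelling_def
proof (intro conjI allI)
  have "{s\<in>S - {x, y}. L s} = {s\<in>S. L s} - {x}" "{s\<in>S - {x, y}. \<not> L s} = {s\<in>S. \<not> L s} - {y}"
    using assms(6,7) by auto
  then show "card {s\<in>S - {x, y}. L s} = card {s\<in>S - {x, y}. \<not> L s}"
    using assms(1-4,6,7) unfolding dyck_labelling_def by (simp add: card_Diff_singleton)
  fix t
  show "card {s\<in>S - {x, y}. s \<le> t \<and> \<not> L s} \<le> card {s\<in>S - {x, y}. s \<le> t \<and> L s}"
  proof (cases "t < y")
    case True
    then have "L s" if "s \<in> S" "s \<le> t" for s using assms(8) that by (meson le_less_trans)
    then have "{s\<in>S - {x, y}. s \<le> t \<and> \<not> L s} = {}" by blast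
    then show ?thesis by (metis card.empty le0)
  next
    case False
    then have "{s\<in>S - {x, y}. s \<le> t \<and> \<not> L s} = {s\<in>S. s \<le> t \<and> \<not> L s} - {y}"
      "{s\<in>S - {x, y}. s \<le> t \<and> L s} = {s\<in>S. s \<le> t \<and> L s} - {x}"
      "y \<in> {s\<in>S. s \<le> t \<and> \<not> L s}" "x \<in> {s\<in>S. s \<le> t \<and> L s}"
      using assms(3-7) by auto
    then show ?thesis using assms(1,2) unfolding dyck_labelling_def
      by (simp add: card_Diff_singleton diff_le_mono)
  qed
qed

lemma noncrossing_matching_exists:
  assumes "finite S" "dyck_labelling S L"
  shows "\<exists>M. noncrossing_matching S L M"
  using assms
proof (induction "card S" arbitrary: S rule: less_induct)
  case less
  show ?case
  proof (cases "{s\<in>S. \<not> L s} = {}")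
    case True
    then have "card {s\<in>S. L s} = 0" using less.prems(2) unfolding dyck_labelling_def by (metis card.empty)
    then have "S = {}" using True less.prems(1) by auto
    then have "noncrossing_matching S L {}" by unfold_locales (simp_all add: perfect_matching_def)
    then show ?thesis by blast
  next
    case False
    define y where "y = Min {s\<in>S. \<not> L s}"
    have fin: "finite {s\<in>S. \<not> L s}" using less.prems(1) by simp
    have y: "y \<in> S" "\<not> L y" "\<forall>s\<in>S. \<not> L s \<longrightarrow> y \<le> s"
      using Min_in[OF fin False] Min_le[OF fin] unfolding y_def by auto
    have "y \<in> {s\<in>S. s \<le> y \<and> \<not> L s}" using y by simp
    then have "0 < card {s\<in>S. s \<le> y \<and> \<not> L s}" using less.prems(1) by (auto simp: card_gt_0_iff)
    also have "\<dots> \<le> card {s\<in>S. s \<le> y \<and> L s}" using less.prems(2) unfolding dyck_labelling_def by blast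
    finally obtain s where "s \<in> S" "s \<le> y" "L s" by (auto simp: card_gt_0_iff)
    then have "\<exists>s\<in>S. s < y" using y(2) by (metis order_le_less)
    then obtain x where x: "x \<in> S" "x < y" "L x" "\<forall>z\<in>S. \<not> (x < z \<and> z < y)"
      using adjacent_plus_minus_pair[OF less.prems(1) y] by blast
    have "card (S - {x, y}) < card S"
      using card_Diff2_less[OF less.prems(1) x(1) y(1)] by (simp add: Diff_insert2[symmetric])
    moreover have "dyck_labelling (S - {x, y}) L"
      using dyck_labelling_remove[OF less.prems x(1) y(1) x(2,3) y(2)] y(3) by force
    ultimately obtain M where "noncrossing_matching (S - {x, y}) L M"
      using less.hyps less.prems(1) by blast
    then show ?thesis using noncrossing_matching_insert x y(1,2) by blast
  qed
qed

section \<open>The arc diagram M and the cup diagram C(w)\<close>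

lemma uminus_mem_Pset [simp]: "- j \<in> Pset n \<longleftrightarrow> j \<in> Pset n"
  unfolding Pset_def by auto

lemma finite_Pset: "finite (Pset n)"
  unfolding Pset_def by simp

lemma plab_uminus: "j \<in> Pset n \<Longrightarrow> plab n a (- j) \<longleftrightarrow> \<not> plab n a j"
  unfolding Pset_def plab_def by auto

lemma card_minus_points_le:
  "card {s\<in>Pset n. s \<le> int n \<and> \<not> plab n a s} \<le> n"
proof -
  let ?N = "{s\<in>Pset n. s \<le> int n \<and> \<not> plab n a s}"
  have "inj_on abs ?N"
  proof (rule inj_onI)
    fix s s' assume "s \<in> ?N" "s' \<in> ?N" "\<bar>s\<bar> = \<bar>s'\<bar>"
    then show "s = s'" using plab_uminus[of s' n a] by (auto simp: abs_eq_iff)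
  qed
  moreover have "abs ` ?N \<subseteq> {1 .. int n}"
    unfolding Pset_def plab_def by (auto split: if_splits)
  ultimately show ?thesis using card_inj_on_le[of abs ?N "{1 .. int n}"] by simp
qed

lemma dyck_labelling_plab: "dyck_labelling (Pset n) (plab n a)"
  unfolding dyck_labelling_def
proof (intro conjI allI)
  let ?L = "plab n a"
  have "bij_betw uminus {s\<in>Pset n. ?L s} {s\<in>Pset n. \<not> ?L s}"
    by (rule bij_betw_byWitness[where f' = uminus]) (auto simp: plab_uminus)
  then show balanced: "card {s\<in>Pset n. ?L s} = card {s\<in>Pset n. \<not> ?L s}"
    by (rule bij_betw_same_card)
  fix t
  consider "int n \<le> t" | "t < - int n" | "- int n \<le> t" "t < int n" by linarith
  then show "card {s\<in>Pset n. s \<le> t \<and> \<not> ?L s} \<le> card {s\<in>Pset n. s \<le> t \<and> ?L s}"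
  proof cases
    case 1
    then have "{s\<in>Pset n. s \<le> t \<and> ?L s} = {s\<in>Pset n. ?L s}"
      unfolding plab_def by (auto split: if_splits)
    moreover have "card {s\<in>Pset n. s \<le> t \<and> \<not> ?L s} \<le> card {s\<in>Pset n. \<not> ?L s}"
      using finite_Pset by (intro card_mono) auto
    ultimately show ?thesis using balanced by simp
  next
    case 2
    then have "{s\<in>Pset n. s \<le> t \<and> \<not> ?L s} = {}" unfolding plab_def by auto
    then show ?thesis by (metis card.empty le0)
  next
    case 3
    have "card {s\<in>Pset n. s \<le> t \<and> \<not> ?L s} \<le> card {s\<in>Pset n. s \<le> int n \<and> \<not> ?L s}"
      using 3 finite_Pset by (intro card_mono) auto
    also have "\<dots> \<le> n" by (rule card_minus_points_le)
    also have "n = card {- 2 * int n .. - int n - 1}" by simp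
    also have "\<dots> \<le> card {s\<in>Pset n. s \<le> t \<and> ?L s}"
      using 3 finite_Pset by (intro card_mono) (auto simp: Pset_def plab_def)
    finally show ?thesis .
  qed
qed

lemma is_M_iff: "is_M n a M \<longleftrightarrow> noncrossing_matching (Pset n) (plab n a) M"
  unfolding is_M_def noncrossing_matching_def perfect_matching_def card_eq_1_iff_ex1 by fast

lemma Mdiag_noncrossing_matching: "noncrossing_matching (Pset n) (plab n a) (Mdiag n a)"
proof -
  obtain M where M: "noncrossing_matching (Pset n) (plab n a) M"
    using noncrossing_matching_exists[OF finite_Pset dyck_labelling_plab] by blast
  have "Mdiag n a = M"
    unfolding Mdiag_def is_M_iff
    using M noncrossing_matching_unique[OF finite_Pset _ M] by (rule the_equality)
  then show ?thesis using M by simp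
qed

lemma Mdiag_mirror:
  assumes "(x, y) \<in> Mdiag n a"
  shows "(- y, - x) \<in> Mdiag n a"
proof -
  let ?M = "Mdiag n a"
  have "noncrossing_matching (Pset n) (plab n a) ((\<lambda>(x, y). (- y, - x)) ` ?M)"
    using noncrossing_matching_reflect[OF Mdiag_noncrossing_matching] plab_uminus by auto
  then have "(\<lambda>(x, y). (- y, - x)) ` ?M = ?M"
    using noncrossing_matching_unique[OF finite_Pset _ Mdiag_noncrossing_matching] by blast
  then show ?thesis using assms by force
qed

lemma Mdiag_crossing_arc: "(x, y) \<in> Mdiag n a \<Longrightarrow> x < 0 \<Longrightarrow> 0 < y \<Longrightarrow> x = - y"
  using noncrossing_matching_crossing_arc[OF Mdiag_noncrossing_matching Mdiag_mirror] .

lemma mem_crossY_iff: "y \<in> set (crossY n a) \<longleftrightarrow> 0 < y \<and> (- y, y) \<in> Mdiag n a"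
proof -
  interpret noncrossing_matching "Pset n" "plab n a" "Mdiag n a"
    by (rule Mdiag_noncrossing_matching)
  let ?Y = "{y. \<exists>x. (x, y) \<in> Mdiag n a \<and> x < 0 \<and> 0 < y}"
  have "?Y \<subseteq> Pset n" using arc_mem by auto
  then have "finite ?Y" using finite_subset finite_Pset by blast
  moreover have "?Y = {y. 0 < y \<and> (- y, y) \<in> Mdiag n a}"
    using Mdiag_crossing_arc by (fastforce simp: neg_less_0_iff_less)
  ultimately show ?thesis unfolding crossY_def by simp
qed

lemma distinct_crossY: "distinct (crossY n a)"
  unfolding crossY_def by simp

lemma positive_arcs_perfect_matching:
  "perfect_matching ({1 .. 2 * int n} - set (crossY n a)) {e \<in> Mdiag n a. 0 < fst e}"
proof -
  interpret noncrossing_matching "Pset n" "plab n a" "Mdiag n a"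
    by (rule Mdiag_noncrossing_matching)
  let ?R = "{1 .. 2 * int n} - set (crossY n a)"
  have not_cross: "x \<notin> set (crossY n a) \<and> y \<notin> set (crossY n a)"
    if "(x, y) \<in> Mdiag n a" "0 < x" for x y
  proof -
    have "(- x, x) \<notin> Mdiag n a" using arc_oriented that(1) by blast
    moreover have "(- y, y) \<notin> Mdiag n a"
      using arc_unique[OF that(1), of "(- y, y)" y] that(2) arc_oriented[OF that(1)] by auto
    ultimately show ?thesis by (simp add: mem_crossY_iff)
  qed
  show ?thesis
  proof (rule perfect_matchingI)
    show "{e \<in> Mdiag n a. 0 < fst e} \<subseteq> ?R \<times> ?R"
      using arc_mem arc_oriented not_cross unfolding Pset_def by fastforce
    show "\<exists>e\<in>{e \<in> Mdiag n a. 0 < fst e}. fst e = p \<or> snd e = p" if "p \<in> ?R" for p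
    proof -
      have "p \<in> Pset n" using that unfolding Pset_def by auto
      then obtain e where e: "e \<in> Mdiag n a" "fst e = p \<or> snd e = p"
        using perfect_matching_covers[OF perfect] by blast
      have "fst e \<noteq> 0" using arc_mem[of "fst e" "snd e"] e(1) unfolding Pset_def by auto
      moreover have "\<not> fst e < 0"
      proof
        assume "fst e < 0"
        then have "p = snd e" "fst e = - p" using e that arc_oriented[of "fst e" "snd e"]
            Mdiag_crossing_arc[of "fst e" "snd e"]
          by auto
        then have "(- p, p) \<in> Mdiag n a" using e(1) by (metis prod.collapse)
        then show False using that by (auto simp: mem_crossY_iff)
      qed
      ultimately have "e \<in> {e \<in> Mdiag n a. 0 < fst e}" using e(1) by simp
      then show ?thesis using e(2) by blast
    qed
  qed (use arc_unique in blast)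
qed

lemma crossY_subset: "set (crossY n a) \<subseteq> {1 .. 2 * int n}"
proof
  fix y assume "y \<in> set (crossY n a)"
  then have "0 < y" "(- y, y) \<in> Mdiag n a" by (simp_all add: mem_crossY_iff)
  then show "y \<in> {1 .. 2 * int n}"
    using noncrossing_matching.arc_mem[OF Mdiag_noncrossing_matching] unfolding Pset_def by fastforce
qed

lemma even_length_crossY: "even (length (crossY n a))"
proof -
  interpret noncrossing_matching "Pset n" "plab n a" "Mdiag n a"
    by (rule Mdiag_noncrossing_matching)
  let ?R = "{1 .. 2 * int n} - set (crossY n a)" and ?A = "{e \<in> Mdiag n a. 0 < fst e}"
  have "card {p\<in>?R. plab n a p} = card ?A"
    by (rule card_perfect_matching_sides[OF positive_arcs_perfect_matching]) (use arc_oriented in auto)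
  moreover have "card {p\<in>?R. \<not> plab n a p} = card ?A"
    by (rule card_perfect_matching_sides[OF positive_arcs_perfect_matching]) (use arc_oriented in auto)
  ultimately have "card ?R = 2 * card ?A" using card_filter_add_filter_not[of ?R "plab n a"] by simp
  moreover have "card ?R = 2 * n - length (crossY n a)"
    using card_Diff_subset[OF _ crossY_subset] distinct_card[OF distinct_crossY] by simp
  moreover have "length (crossY n a) \<le> 2 * n"
    using card_mono[OF finite_atLeastAtMost_int crossY_subset[of n a]] distinct_card[OF distinct_crossY]
    by simp
  ultimately show ?thesis by presburger
qed

lemma card_plab_positive: "card {p \<in> {1 .. 2 * int n}. plab n a p} = card {i. i < n \<and> a ! i}"
proof -
  have "{p \<in> {1 .. 2 * int n}. plab n a p} = (\<lambda>i. int i + 1) ` {i. i < n \<and> a ! i}"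
  proof (rule set_eqI)
    fix p
    show "p \<in> {p \<in> {1 .. 2 * int n}. plab n a p} \<longleftrightarrow> p \<in> (\<lambda>i. int i + 1) ` {i. i < n \<and> a ! i}"
      unfolding plab_def by (auto simp: image_iff nat_add_distrib intro: exI[of _ "nat p - 1"])
  qed
  then show ?thesis by (simp add: card_image inj_on_def)
qed

lemma card_up_off_crossY:
  assumes "\<forall>(x, y) \<in> cups n a. \<mu> x \<noteq> \<mu> y"
  shows "card {p \<in> {1 .. 2 * int n} - set (crossY n a). \<mu> p} = card {i. i < n \<and> a ! i}"
proof -
  interpret noncrossing_matching "Pset n" "plab n a" "Mdiag n a"
    by (rule Mdiag_noncrossing_matching)
  let ?R = "{1 .. 2 * int n} - set (crossY n a)" and ?A = "{e \<in> Mdiag n a. 0 < fst e}"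
  have "\<forall>e\<in>?A. \<mu> (fst e) \<noteq> \<mu> (snd e)"
  proof
    fix e assume "e \<in> ?A"
    then have "e \<in> cups n a" unfolding cups_def Let_def by auto
    then show "\<mu> (fst e) \<noteq> \<mu> (snd e)" using assms by (cases e) auto
  qed
  then have "card {p\<in>?R. \<mu> p} = card ?A"
    by (rule card_perfect_matching_sides[OF positive_arcs_perfect_matching])
  also have "\<dots> = card {p\<in>?R. plab n a p}"
    by (rule card_perfect_matching_sides[OF positive_arcs_perfect_matching, symmetric])
      (use arc_oriented in auto)
  also have "{p\<in>?R. plab n a p} = {p \<in> {1 .. 2 * int n}. plab n a p}"
    using arc_oriented by (auto simp: mem_crossY_iff)
  also have "card \<dots> = card {i. i < n \<and> a ! i}" by (rule card_plab_positive)
  finally show ?thesis .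
qed

lemma card_up_points:
  assumes "\<forall>j \<in> {int n + 1 .. 2 * int n}. \<mu> j" and "\<forall>(x, y) \<in> cups n a. \<mu> x \<noteq> \<mu> y"
  shows "card {j \<in> {1 .. int n}. \<mu> j} + n = card {i. i < n \<and> a ! i} + length (filter \<mu> (crossY n a))"
proof -
  let ?R = "{1 .. 2 * int n} - set (crossY n a)"
  have "card {p \<in> {1 .. 2 * int n}. \<mu> p} = card {p\<in>?R. \<mu> p} + card {p \<in> set (crossY n a). \<mu> p}"
  proof -
    have "{p \<in> {1 .. 2 * int n}. \<mu> p} = {p\<in>?R. \<mu> p} \<union> {p \<in> set (crossY n a). \<mu> p}"
      using crossY_subset[of n a] by auto
    moreover have "finite {p\<in>?R. \<mu> p}" by (rule finite_subset[of _ "{1 .. 2 * int n}"]) auto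
    moreover have "{p\<in>?R. \<mu> p} \<inter> {p \<in> set (crossY n a). \<mu> p} = {}" by auto
    ultimately show ?thesis
      using card_Un_disjoint[of "{p\<in>?R. \<mu> p}" "{p \<in> set (crossY n a). \<mu> p}"] by simp
  qed
  moreover have "card {p \<in> {1 .. 2 * int n}. \<mu> p} = card {j \<in> {1 .. int n}. \<mu> j} + n"
  proof -
    have "{p \<in> {1 .. 2 * int n}. \<mu> p} = {j \<in> {1 .. int n}. \<mu> j} \<union> {int n + 1 .. 2 * int n}"
      using assms(1) by auto
    moreover have "finite {j \<in> {1 .. int n}. \<mu> j}" by (rule finite_subset[of _ "{1 .. int n}"]) auto
    moreover have "{j \<in> {1 .. int n}. \<mu> j} \<inter> {int n + 1 .. 2 * int n} = {}" by auto
    ultimately show ?thesis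
      using card_Un_disjoint[of "{j \<in> {1 .. int n}. \<mu> j}" "{int n + 1 .. 2 * int n}"] by simp
  qed
  moreover have "card {p \<in> set (crossY n a). \<mu> p} = length (filter \<mu> (crossY n a))"
    using distinct_length_filter[OF distinct_crossY] by (simp add: Collect_conj_eq Int_commute)
  ultimately show ?thesis using card_up_off_crossY[OF assms(2)] by simp
qed

lemma even_up_crossY:
  assumes "\<forall>j \<in> Pset n. \<mu> (- j) = (\<not> \<mu> j)" and "\<forall>(x, y) \<in> cups n a. \<mu> x \<noteq> \<mu> y"
  shows "even (length (filter \<mu> (crossY n a)))"
proof (rule even_length_filter_pairs[OF _ even_length_crossY])
  fix j let ?Y = "crossY n a"
  assume j: "2 * j + 1 < length ?Y"
  then have "(- (?Y ! (2 * j + 1)), ?Y ! (2 * j)) \<in> cups n a"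
    unfolding cups_def Let_def by blast
  moreover have "?Y ! (2 * j + 1) \<in> Pset n"
    using crossY_subset nth_mem[OF j] unfolding Pset_def by blast
  ultimately show "\<mu> (?Y ! (2 * j)) = \<mu> (?Y ! (2 * j + 1))" using assms by fastforce
qed

section \<open>Parity of minus signs\<close>

lemma length_sact: "2 \<le> length b \<Longrightarrow> i < length b \<Longrightarrow> length (sact i b) = length b"
  unfolding sact_def by auto

lemma even_minus_sact:
  assumes "2 \<le> length b" "i < length b"
  shows "even (length (filter Not (sact i b))) \<longleftrightarrow> even (length (filter Not b))"
proof (cases "i = 0")
  case True
  obtain b0 b1 r where "b = b0 # b1 # r" using assms(1)
    by (metis One_nat_def Suc_1 Suc_le_length_iff)
  then show ?thesis using True unfolding sact_def by auto
next
  case False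
  then have "mset (sact i b) = mset b"
    using mset_swap[of i b "i - 1"] assms unfolding sact_def by simp
  then have "length (filter Not (sact i b)) = length (filter Not b)"
    by (metis mset_filter size_mset)
  then show ?thesis by simp
qed

lemma length_wact: "2 \<le> length b \<Longrightarrow> set ws \<subseteq> {..<length b} \<Longrightarrow> length (wact b ws) = length b"
  by (induction ws arbitrary: b) (simp_all add: wact_def length_sact)

lemma even_minus_wact:
  "2 \<le> length b \<Longrightarrow> set ws \<subseteq> {..<length b} \<Longrightarrow>
    even (length (filter Not (wact b ws))) \<longleftrightarrow> even (length (filter Not b))"
  by (induction ws arbitrary: b) (simp_all add: wact_def length_sact even_minus_sact)

theorem lemma3p5:
  fixes n :: nat and w :: "int \<Rightarrow> int" and ws :: "nat list" and \<mu> :: "int \<Rightarrow> bool"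
  assumes "n \<ge> 4"
    and "w \<in> Wp_reps n"
    and "set ws \<subseteq> {..<n}" and "welt ws = w"
    and "\<forall>j \<in> Pset n. \<mu> (- j) = (\<not> \<mu> j)"
    and "\<forall>j \<in> {int n + 1 .. 2 * int n}. \<mu> j"
    and "\<forall>(x, y) \<in> cups n (wact (replicate n True) ws). \<mu> x \<noteq> \<mu> y"
  shows "even (card {j \<in> {1 .. int n}. \<mu> j})"
proof -
  define a where "a = wact (replicate n True) ws"
  have "length a = n" "even (length (filter Not a))"
    using length_wact[of "replicate n True" ws] even_minus_wact[of "replicate n True" ws] assms(1,3)
    unfolding a_def by simp_all
  then have plus_minus: "card {i. i < n \<and> a ! i} + card {i. i < n \<and> \<not> a ! i} = n"
    and even_minus: "even (card {i. i < n \<and> \<not> a ! i})"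
    using card_filter_add_filter_not[of "{..<n}" "(!) a"] by (simp_all add: length_filter_conv_card)
  have "card {j \<in> {1 .. int n}. \<mu> j} + n = card {i. i < n \<and> a ! i} + length (filter \<mu> (crossY n a))"
    using card_up_points assms(6,7) unfolding a_def by blast
  then have "card {j \<in> {1 .. int n}. \<mu> j} + card {i. i < n \<and> \<not> a ! i} = length (filter \<mu> (crossY n a))"
    using plus_minus by linarith
  moreover have "even (length (filter \<mu> (crossY n a)))"
    using even_up_crossY assms(5,7) unfolding a_def by blast
  ultimately show ?thesis using even_minus by (metis even_add)
qed

end
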